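(* Let $p=(p_1,p_2,p_3,p_4)$ be an ordered quadruple of distinct points of $\partial\mathbf H^2_{\mathbb C}$ and let $(X_1,X_2,A)=\bigl(X(p_1,p_2,p_3,p_4),X(p_1,p_3,p_2,p_4),\mathbb A(p_1,p_2,p_3)\bigr)$. Then some triple $(p_i,p_j,p_k)$, $i<j<k$, lies on a chain if and only if $(X_1,X_2,A)$ belongs to at least one of the sets $\mathbb S_{123},\mathbb S_{124},\mathbb S_{134},\mathbb S_{234}$. Moreover, all four points lie on a common chain if and only if $(X_1,X_2,A)$ belongs to at least two of these sets.
   Context: $\mathbb C^{2,1}$ is $\mathbb C^3$ with Hermitian form $\langle Z,W\rangle=z_1\overline{w}_3+z_2\overline{w}_2+z_3\overline{w}_1$; $\partial\mathbf H^2_{\mathbb C}$ is the set of null lines in $\mathbb P\mathbb C^2$. A chain is the boundary of a complex geodesic (intersection of $\partial\mathbf H^2_{\mathbb C}$ with the projectivization of a 2-dimensional complex subspace of signature $(1,1)$). With null lifts $P_i$: $X(p_1,p_2,p_3,p_4)=\dfrac{\langle P_3,P_1\rangle\langle P_4,P_2\rangle}{\langle P_4,P_1\rangle\langle P_3,P_2\rangle}$, $\mathbb A(p_1,p_2,p_3)=\arg\bigl(-\langle P_1,P_2\rangle\langle P_2,P_3\rangle\langle P_3,P_1\rangle\bigr)$. The Cartan varieties in $\mathbb C^2\times\mathbb R$ are $\mathbb S_{123}=\{\mathrm{Re}(e^{iA})=0\}$, $\mathbb S_{124}=\{\mathrm{Re}(\overline{X}_1e^{iA})=0\}$, $\mathbb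 S_{134}=\{\mathrm{Re}(\overline{X}_2e^{-iA})=0\}$, $\mathbb S_{234}=\{\mathrm{Re}(X_1\overline{X}_2e^{-iA})=0\}$. *)

theory Defs
  imports "HOL-Analysis.Analysis"
begin

text \<open>Vectors of C^{2,1} are elements of complex^3; points of the boundary of complex
hyperbolic 2-space are represented by nonzero null lifts.\<close>

definition herm :: "complex^3 \<Rightarrow> complex^3 \<Rightarrow> complex" where
  "herm Z W = Z$1 * cnj (W$3) + Z$2 * cnj (W$2) + Z$3 * cnj (W$1)"

definition null_lift :: "complex^3 \<Rightarrow> bool" where
  "null_lift Z \<longleftrightarrow> Z \<noteq> 0 \<and> herm Z Z = 0"

definition same_point :: "complex^3 \<Rightarrow> complex^3 \<Rightarrow> bool" where
  "same_point Z W \<longleftrightarrow> (\<exists>c::complex. W = c *s Z)"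

text \<open>The projectivised 2-dim subspace span{U,W} has signature (1,1): it has an
orthogonal basis U, W with herm U U > 0 and herm W W < 0.\<close>
definition signature_11_basis :: "complex^3 \<Rightarrow> complex^3 \<Rightarrow> bool" where
  "signature_11_basis U W \<longleftrightarrow>
     Re (herm U U) > 0 \<and> Re (herm W W) < 0 \<and> herm U W = 0"

definition in_span2 :: "complex^3 \<Rightarrow> complex^3 \<Rightarrow> complex^3 \<Rightarrow> bool" where
  "in_span2 U W Z \<longleftrightarrow> (\<exists>a b::complex. Z = a *s U + b *s W)"

text \<open>A set of points lies on a chain: all lifts lie in one 2-dim complex subspace
of signature (1,1).\<close>
definition on_chain :: "(complex^3) list \<Rightarrow> bool" where
  "on_chain Ps \<longleftrightarrow> (\<exists>U W. signature_11_basis U W \<and> (\<forall>Z\<in>set Ps. in_span2 U W Z))"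

definition cross_ratio :: "complex^3 \<Rightarrow> complex^3 \<Rightarrow> complex^3 \<Rightarrow> complex^3 \<Rightarrow> complex" where
  "cross_ratio P1 P2 P3 P4 =
     (herm P3 P1 * herm P4 P2) / (herm P4 P1 * herm P3 P2)"

definition cartan_inv :: "complex^3 \<Rightarrow> complex^3 \<Rightarrow> complex^3 \<Rightarrow> real" where
  "cartan_inv P1 P2 P3 = Arg (- herm P1 P2 * herm P2 P3 * herm P3 P1)"

definition S123 :: "(complex \<times> complex \<times> real) set" where
  "S123 = {(X1, X2, A). Re (exp (\<i> * of_real A)) = 0}"

definition S124 :: "(complex \<times> complex \<times> real) set" where
  "S124 = {(X1, X2, A). Re (cnj X1 * exp (\<i> * of_real A)) = 0}"

definition S134 :: "(complex \<times> complex \<times> real) set" where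
  "S134 = {(X1, X2, A). Re (cnj X2 * exp (- \<i> * of_real A)) = 0}"

definition S234 :: "(complex \<times> complex \<times> real) set" where
  "S234 = {(X1, X2, A). Re (X1 * cnj X2 * exp (- \<i> * of_real A)) = 0}"

definition cartan_varieties :: "(complex \<times> complex \<times> real) set list" where
  "cartan_varieties = [S123, S124, S134, S234]"

definition num_cartan :: "complex \<times> complex \<times> real \<Rightarrow> nat" where
  "num_cartan x = length (filter (\<lambda>S. x \<in> S) cartan_varieties)"

end

theory Submission
  imports Defs
begin

text \<open>For null lifts the Gram determinant of three vectors collapses to
  \<open>2 Re \<langle>P,Q\<rangle>\<langle>Q,R\<rangle>\<langle>R,P\<rangle> = -|det(P,Q,R)|\<^sup>2\<close>.
  Hence a triple lies on a chain (the span of two distinct null vectors always has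
  signature (1,1)) exactly when its lifts are linearly dependent, i.e. when its Hermitian
  triple product is purely imaginary.
  Each Cartan variety \<open>S\<^sub>i\<^sub>j\<^sub>k\<close> is cut out by an expression that is a positive real
  multiple of the triple product of \<open>p\<^sub>i, p\<^sub>j, p\<^sub>k\<close> (or of its conjugate), so it records
  precisely whether that triple lies on a chain. Two triples on chains share two points,
  which span the chain, so then all four points lie on it.\<close>

lemma cnj_herm: "cnj (herm P Q) = herm Q P"
  unfolding herm_def by simp

lemma herm_add_left: "herm (P + Q) R = herm P R + herm Q R"
  and herm_add_right: "herm R (P + Q) = herm R P + herm R Q"
  and herm_diff_left: "herm (P - Q) R = herm P R - herm Q R"
  and herm_diff_right: "herm R (P - Q) = herm R P - herm R Q"
  and herm_scale_left: "herm (c *s P) R = c * herm P R"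
  and herm_scale_right: "herm R (c *s P) = cnj c * herm R P"
  unfolding herm_def by (simp_all add: algebra_simps)

lemmas herm_sesquilinear = herm_add_left herm_add_right herm_diff_left herm_diff_right
  herm_scale_left herm_scale_right

definition det3 :: "complex^3 \<Rightarrow> complex^3 \<Rightarrow> complex^3 \<Rightarrow> complex" where
  "det3 P Q R = P$1 * (Q$2 * R$3 - Q$3 * R$2) - P$2 * (Q$1 * R$3 - Q$3 * R$1)
                + P$3 * (Q$1 * R$2 - Q$2 * R$1)"

lemma det3_swap23: "det3 P R Q = - det3 P Q R"
  and det3_rotate: "det3 Q R P = det3 P Q R"
  and det3_repeat: "det3 P Q P = 0" "det3 P Q Q = 0"
  unfolding det3_def by (simp_all add: algebra_simps)

lemma det3_eq_0_perms:
  assumes "det3 P Q R = 0"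
  shows "det3 P R Q = 0" "det3 Q P R = 0" "det3 Q R P = 0" "det3 R P Q = 0" "det3 R Q P = 0"
  using assms det3_swap23[of P Q R] det3_rotate[of P Q R] det3_rotate[of Q R P]
    det3_swap23[of Q R P] det3_swap23[of R P Q]
  by simp_all

lemma det3_lin_comb:
  "det3 (a1 *s U + b1 *s W) (a2 *s U + b2 *s W) (a3 *s U + b3 *s W) = 0"
  unfolding det3_def by (simp add: algebra_simps)

text \<open>The Gram determinant of \<open>P, Q, R\<close>; the matrix of the form has determinant \<open>-1\<close>.\<close>
lemma herm_gram_det3:
  "herm P P * herm Q Q * herm R R + herm P Q * herm Q R * herm R P + herm P R * herm Q P * herm R Q
   - herm P P * herm Q R * herm R Q - herm Q Q * herm P R * herm R P - herm R R * herm P Q * herm Q P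
   = - (det3 P Q R * cnj (det3 P Q R))"
  unfolding herm_def det3_def
  by (simp only: complex_cnj_mult complex_cnj_add complex_cnj_diff) (simp add: algebra_simps)

definition herm_triple :: "complex^3 \<Rightarrow> complex^3 \<Rightarrow> complex^3 \<Rightarrow> complex" where
  "herm_triple P Q R = herm P Q * herm Q R * herm R P"

lemma Re_herm_triple_null:
  assumes "null_lift P" "null_lift Q" "null_lift R"
  shows "2 * Re (herm_triple P Q R) = - (cmod (det3 P Q R))\<^sup>2"
proof -
  have "herm_triple P Q R + cnj (herm_triple P Q R) = - (det3 P Q R * cnj (det3 P Q R))"
    using herm_gram_det3[of P Q R] assms
    by (simp add: herm_triple_def null_lift_def cnj_herm mult_ac)
  then have "Re (herm_triple P Q R + cnj (herm_triple P Q R)) = - (cmod (det3 P Q R))\<^sup>2"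
    by (simp only: complex_norm_square[symmetric]) simp
  then show ?thesis by simp
qed

lemma Re_herm_triple_eq_0_iff:
  assumes "null_lift P" "null_lift Q" "null_lift R"
  shows "Re (herm_triple P Q R) = 0 \<longleftrightarrow> det3 P Q R = 0"
  using Re_herm_triple_null[OF assms] by auto

definition cross :: "complex^3 \<Rightarrow> complex^3 \<Rightarrow> complex^3" where
  "cross P Q = vector [P$2 * Q$3 - P$3 * Q$2, P$3 * Q$1 - P$1 * Q$3, P$1 * Q$2 - P$2 * Q$1]"

lemma det3_axis: "det3 P Q (axis k 1) = cross P Q $ k"
  using exhaust_3[of k] by (auto simp: det3_def cross_def axis_def algebra_simps)

lemma cross_expansion:
  "cross Q R $ k *s P + cross R P $ k *s Q + cross P Q $ k *s R = det3 P Q R *s axis k 1"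
  using exhaust_3[of k]
  by (auto simp: vec_eq_iff forall_3 cross_def det3_def axis_def algebra_simps)

lemma cross_nonzero:
  assumes "P \<noteq> 0" "\<not> same_point P Q"
  shows "cross P Q \<noteq> 0"
proof
  assume "cross P Q = 0"
  then have minors: "P$2 * Q$3 = P$3 * Q$2" "P$3 * Q$1 = P$1 * Q$3" "P$1 * Q$2 = P$2 * Q$1"
    by (auto simp: cross_def vec_eq_iff forall_3)
  obtain i where "P$i \<noteq> 0"
    using assms(1) by (auto simp: vec_eq_iff)
  then have "Q = (Q$i / P$i) *s P"
    using minors exhaust_3[of i] by (auto simp: vec_eq_iff forall_3 field_simps)
  with assms(2) show False
    unfolding same_point_def by blast
qed

lemma in_span2_of_det3_eq_0:
  assumes "P \<noteq> 0" "\<not> same_point P Q" "det3 P Q R = 0"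
  shows "in_span2 P Q R"
proof -
  obtain k where k: "cross P Q $ k \<noteq> 0"
    using cross_nonzero[OF assms(1,2)] by (auto simp: vec_eq_iff)
  have "cross P Q $ k *s R = - cross Q R $ k *s P - cross R P $ k *s Q"
    using cross_expansion[of Q R k P] assms(3) by (simp add: eq_neg_iff_add_eq_0 algebra_simps)
  then have "R = (- cross Q R $ k / cross P Q $ k) *s P + (- cross R P $ k / cross P Q $ k) *s Q"
    using k by (auto simp: vec_eq_iff field_simps)
  then show ?thesis
    unfolding in_span2_def by blast
qed

lemma herm_nonzero:
  assumes "null_lift P" "null_lift Q" "\<not> same_point P Q"
  shows "herm P Q \<noteq> 0"
proof
  assume "herm P Q = 0"
  then have "herm Q P = 0"
    using cnj_herm[of P Q] by simp
  with \<open>herm P Q = 0\<close> have "det3 P Q R = 0" for R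
    using herm_gram_det3[of P Q R] assms(1,2) by (simp add: null_lift_def)
  then have "cross P Q = 0"
    by (simp add: vec_eq_iff flip: det3_axis)
  with cross_nonzero assms show False
    unfolding null_lift_def by blast
qed

text \<open>For distinct null \<open>P, Q\<close> with \<open>h = \<langle>P,Q\<rangle>\<close>, the vectors \<open>P \<plusminus> h Q\<close> are an orthogonal
  basis of their span of norms \<open>\<plusminus>2|h|\<^sup>2\<close>.\<close>
lemma on_chain_of_in_span2:
  assumes "null_lift P" "null_lift Q" "\<not> same_point P Q" "\<forall>Z\<in>set Zs. in_span2 P Q Z"
  shows "on_chain Zs"
proof -
  define h where "h = herm P Q"
  define U where "U = P + h *s Q"
  define W where "W = P - h *s Q"
  have "h \<noteq> 0"
    unfolding h_def using herm_nonzero assms by blast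
  have herms: "herm P P = 0" "herm Q Q = 0" "herm P Q = h" "herm Q P = cnj h"
    using assms(1,2) cnj_herm[of P Q] by (auto simp: null_lift_def h_def)
  have norm_h: "h * cnj h = of_real ((cmod h)\<^sup>2)"
    by (simp flip: complex_norm_square)
  have "herm U U = 2 * (h * cnj h)" "herm W W = - 2 * (h * cnj h)" "herm U W = 0"
    unfolding U_def W_def by (simp_all add: herm_sesquilinear herms algebra_simps)
  then have "signature_11_basis U W"
    using \<open>h \<noteq> 0\<close> unfolding signature_11_basis_def norm_h by simp
  moreover have "in_span2 U W Z" if Z_in: "Z \<in> set Zs" for Z
  proof -
    obtain a b where Z: "Z = a *s P + b *s Q"
      using assms(4) Z_in unfolding in_span2_def by blast
    have "Z = (a/2 + b/(2*h)) *s U + (a/2 - b/(2*h)) *s W"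
      unfolding Z U_def W_def using \<open>h \<noteq> 0\<close> by (auto simp: vec_eq_iff forall_3 field_simps)
    then show ?thesis
      unfolding in_span2_def by blast
  qed
  ultimately show ?thesis
    unfolding on_chain_def by blast
qed

lemma det3_eq_0_of_on_chain:
  assumes "on_chain Zs" "P \<in> set Zs" "Q \<in> set Zs" "R \<in> set Zs"
  shows "det3 P Q R = 0"
proof -
  obtain U W where "\<forall>Z\<in>set Zs. in_span2 U W Z"
    using assms(1) unfolding on_chain_def by blast
  then obtain a1 b1 a2 b2 a3 b3
    where "P = a1 *s U + b1 *s W" "Q = a2 *s U + b2 *s W" "R = a3 *s U + b3 *s W"
    using assms(2-4) unfolding in_span2_def by meson
  then show ?thesis
    using det3_lin_comb by simp
qed

text \<open>Any two distinct points of a chain determine it.\<close>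
lemma on_chain_iff_det3:
  assumes "null_lift P" "null_lift Q" "\<not> same_point P Q" "P \<in> set Zs" "Q \<in> set Zs"
  shows "on_chain Zs \<longleftrightarrow> (\<forall>Z\<in>set Zs. det3 P Q Z = 0)"
proof
  show "on_chain Zs \<Longrightarrow> \<forall>Z\<in>set Zs. det3 P Q Z = 0"
    using assms(4,5) det3_eq_0_of_on_chain by blast
  show "\<forall>Z\<in>set Zs. det3 P Q Z = 0 \<Longrightarrow> on_chain Zs"
    using assms in_span2_of_det3_eq_0 on_chain_of_in_span2
    unfolding null_lift_def by blast
qed

lemma on_chain3_iff_det3:
  assumes "null_lift P" "null_lift Q" "\<not> same_point P Q"
  shows "on_chain [P, Q, R] \<longleftrightarrow> det3 P Q R = 0"
  using on_chain_iff_det3[OF assms, of "[P, Q, R]"] by (simp add: det3_repeat)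

lemma Re_mult_exp_Arg_eq_0_iff:
  assumes "w \<noteq> 0"
  shows "Re (z * exp (\<i> * of_real (Arg w))) = 0 \<longleftrightarrow> Re (z * w) = 0"
    and "Re (z * exp (- \<i> * of_real (Arg w))) = 0 \<longleftrightarrow> Re (z * cnj w) = 0"
proof -
  have sgn: "cis (Arg w) = w / of_real (cmod w)"
    using cis_Arg[OF assms] by (simp add: sgn_div_norm scaleR_conv_of_real field_simps)
  have "exp (- \<i> * of_real (Arg w)) = cis (- Arg w)"
    by (simp add: cis_conv_exp)
  also have "\<dots> = cnj (cis (Arg w))"
    by (simp add: cis_cnj)
  finally have "exp (- \<i> * of_real (Arg w)) = cnj w / of_real (cmod w)"
    using sgn by simp
  moreover have "exp (\<i> * of_real (Arg w)) = w / of_real (cmod w)"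
    using sgn by (simp add: cis_conv_exp)
  ultimately show "Re (z * exp (\<i> * of_real (Arg w))) = 0 \<longleftrightarrow> Re (z * w) = 0"
    and "Re (z * exp (- \<i> * of_real (Arg w))) = 0 \<longleftrightarrow> Re (z * cnj w) = 0"
    using assms by (simp_all add: Re_divide_of_real)
qed

lemma Re_mult_norm_ratio_eq_0_iff:
  assumes "u \<noteq> 0" "v \<noteq> 0"
  shows "Re (z * (u * cnj u) / (v * cnj v)) = 0 \<longleftrightarrow> Re z = 0"
proof -
  have "z * (u * cnj u) / (v * cnj v) = z * of_real ((cmod u)\<^sup>2) / of_real ((cmod v)\<^sup>2)"
    by (simp only: complex_norm_square)
  also have "\<dots> = z * of_real ((cmod u)\<^sup>2 / (cmod v)\<^sup>2)"
    by simp
  finally have "z * (u * cnj u) / (v * cnj v) = z * of_real ((cmod u)\<^sup>2 / (cmod v)\<^sup>2)" .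
  then show ?thesis
    using assms by simp
qed

lemma cartan_inv_herm_triple: "cartan_inv P Q R = Arg (- herm_triple P Q R)"
  by (simp add: cartan_inv_def herm_triple_def)

lemma herm_triple_nonzero:
  assumes "null_lift P" "null_lift Q" "null_lift R"
    and "\<not> same_point P Q" "\<not> same_point P R" "\<not> same_point Q R"
  shows "herm_triple P Q R \<noteq> 0"
  using herm_nonzero[of P Q] herm_nonzero[of Q R] herm_nonzero[of P R] cnj_herm[of P R] assms
  by (auto simp: herm_triple_def)

lemma mem_S123_iff:
  assumes "null_lift P" "null_lift Q" "null_lift R"
    and "\<not> same_point P Q" "\<not> same_point P R" "\<not> same_point Q R"
  shows "(X1, X2, cartan_inv P Q R) \<in> S123 \<longleftrightarrow> det3 P Q R = 0"
proof -
  have "herm_triple P Q R \<noteq> 0"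
    using herm_triple_nonzero assms by blast
  then have "Re (1 * exp (\<i> * of_real (Arg (- herm_triple P Q R)))) = 0
      \<longleftrightarrow> Re (herm_triple P Q R) = 0"
    by (subst Re_mult_exp_Arg_eq_0_iff(1)) simp_all
  then have "(X1, X2, cartan_inv P Q R) \<in> S123 \<longleftrightarrow> Re (herm_triple P Q R) = 0"
    by (simp only: S123_def mem_Collect_eq prod.case cartan_inv_herm_triple mult_1_left)
  then show ?thesis
    using Re_herm_triple_eq_0_iff assms(1-3) by blast
qed

context
  fixes P1 P2 P3 P4 :: "complex^3"
  assumes null: "null_lift P1" "null_lift P2" "null_lift P3" "null_lift P4"
    and distinct: "\<not> same_point P1 P2" "\<not> same_point P1 P3" "\<not> same_point P1 P4"
      "\<not> same_point P2 P3" "\<not> same_point P2 P4" "\<not> same_point P3 P4"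
begin

lemma herm_nonzero4:
  "herm P1 P2 \<noteq> 0" "herm P1 P3 \<noteq> 0" "herm P1 P4 \<noteq> 0"
  "herm P2 P3 \<noteq> 0" "herm P2 P4 \<noteq> 0" "herm P3 P4 \<noteq> 0"
  using herm_nonzero null distinct by blast+

lemmas herm_conj4 = cnj_herm[of P1 P2] cnj_herm[of P1 P3] cnj_herm[of P1 P4]
  cnj_herm[of P2 P3] cnj_herm[of P2 P4] cnj_herm[of P3 P4]

lemma mem_S124_iff:
  "(cross_ratio P1 P2 P3 P4, X2, cartan_inv P1 P2 P3) \<in> S124 \<longleftrightarrow> det3 P1 P2 P4 = 0"
proof -
  let ?w = "- herm_triple P1 P2 P3"
  have "?w \<noteq> 0"
    using herm_triple_nonzero null distinct by simp
  then have "(cross_ratio P1 P2 P3 P4, X2, cartan_inv P1 P2 P3) \<in> S124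
      \<longleftrightarrow> Re (cnj (cross_ratio P1 P2 P3 P4) * ?w) = 0"
    unfolding S124_def cartan_inv_herm_triple mem_Collect_eq prod.case
    by (rule Re_mult_exp_Arg_eq_0_iff(1))
  also have "cnj (cross_ratio P1 P2 P3 P4) * ?w
      = - herm_triple P1 P2 P4 * (herm P1 P3 * cnj (herm P1 P3)) / (herm P1 P4 * cnj (herm P1 P4))"
    using herm_nonzero4
    by (simp add: cross_ratio_def herm_triple_def field_simps flip: herm_conj4)
  also have "Re \<dots> = 0 \<longleftrightarrow> Re (herm_triple P1 P2 P4) = 0"
    using Re_mult_norm_ratio_eq_0_iff herm_nonzero4 by simp
  finally show ?thesis
    using Re_herm_triple_eq_0_iff null by blast
qed

lemma mem_S134_iff:
  "(X1, cross_ratio P1 P3 P2 P4, cartan_inv P1 P2 P3) \<in> S134 \<longleftrightarrow> det3 P1 P3 P4 = 0"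
proof -
  let ?w = "- herm_triple P1 P2 P3"
  have "?w \<noteq> 0"
    using herm_triple_nonzero null distinct by simp
  then have "(X1, cross_ratio P1 P3 P2 P4, cartan_inv P1 P2 P3) \<in> S134
      \<longleftrightarrow> Re (cnj (cross_ratio P1 P3 P2 P4) * cnj ?w) = 0"
    unfolding S134_def cartan_inv_herm_triple mem_Collect_eq prod.case
    by (rule Re_mult_exp_Arg_eq_0_iff(2))
  also have "cnj (cross_ratio P1 P3 P2 P4) * cnj ?w
      = - herm_triple P1 P3 P4 * (herm P1 P2 * cnj (herm P1 P2)) / (herm P1 P4 * cnj (herm P1 P4))"
    using herm_nonzero4
    by (simp add: cross_ratio_def herm_triple_def field_simps flip: herm_conj4)
  also have "Re \<dots> = 0 \<longleftrightarrow> Re (herm_triple P1 P3 P4) = 0"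
    using Re_mult_norm_ratio_eq_0_iff herm_nonzero4 by simp
  finally show ?thesis
    using Re_herm_triple_eq_0_iff null by blast
qed

lemma mem_S234_iff:
  "(cross_ratio P1 P2 P3 P4, cross_ratio P1 P3 P2 P4, cartan_inv P1 P2 P3) \<in> S234
    \<longleftrightarrow> det3 P2 P3 P4 = 0"
proof -
  let ?X1 = "cross_ratio P1 P2 P3 P4" and ?X2 = "cross_ratio P1 P3 P2 P4"
  let ?w = "- herm_triple P1 P2 P3"
  have "?w \<noteq> 0"
    using herm_triple_nonzero null distinct by simp
  then have "(?X1, ?X2, cartan_inv P1 P2 P3) \<in> S234 \<longleftrightarrow> Re (?X1 * cnj ?X2 * cnj ?w) = 0"
    unfolding S234_def cartan_inv_herm_triple mem_Collect_eq prod.case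
    by (rule Re_mult_exp_Arg_eq_0_iff(2))
  also have "?X1 * cnj ?X2 * cnj ?w
      = - herm_triple P2 P3 P4 * ((herm P1 P2 * herm P1 P3) * cnj (herm P1 P2 * herm P1 P3))
        / ((herm P1 P4 * herm P2 P3) * cnj (herm P1 P4 * herm P2 P3))"
    using herm_nonzero4
    by (simp add: cross_ratio_def herm_triple_def field_simps flip: herm_conj4)
  also have "Re \<dots> = 0 \<longleftrightarrow> Re (- herm_triple P2 P3 P4) = 0"
    by (rule Re_mult_norm_ratio_eq_0_iff) (use herm_nonzero4 in simp_all)
  finally show ?thesis
    using Re_herm_triple_eq_0_iff null by simp
qed

lemma on_chain4_of_two_det3:
  assumes "(det3 P1 P2 P3 = 0 \<and> det3 P1 P2 P4 = 0) \<or> (det3 P1 P2 P3 = 0 \<and> det3 P1 P3 P4 = 0)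
    \<or> (det3 P1 P2 P3 = 0 \<and> det3 P2 P3 P4 = 0) \<or> (det3 P1 P2 P4 = 0 \<and> det3 P1 P3 P4 = 0)
    \<or> (det3 P1 P2 P4 = 0 \<and> det3 P2 P3 P4 = 0) \<or> (det3 P1 P3 P4 = 0 \<and> det3 P2 P3 P4 = 0)"
  shows "on_chain [P1, P2, P3, P4]"
proof -
  have chain: "on_chain [P1, P2, P3, P4]"
    if "P \<in> {P1, P2, P3, P4}" "Q \<in> {P1, P2, P3, P4}" "\<not> same_point P Q"
      "det3 P Q R = 0" "det3 P Q S = 0" "{P1, P2, P3, P4} = {P, Q, R, S}" for P Q R S
  proof -
    have "null_lift P" "null_lift Q"
      using that(1,2) null by auto
    then show ?thesis
      using on_chain_iff_det3[of P Q "[P1, P2, P3, P4]"] that by (auto simp: det3_repeat)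
  qed
  from assms show ?thesis
  proof (elim disjE conjE)
    show ?thesis if "det3 P1 P2 P3 = 0" "det3 P1 P2 P4 = 0"
      using chain[of P1 P2 P3 P4] that distinct by auto
    show ?thesis if "det3 P1 P2 P3 = 0" "det3 P1 P3 P4 = 0"
      using chain[of P1 P3 P2 P4] that distinct det3_eq_0_perms[OF that(1)] det3_eq_0_perms[OF that(2)]
      by auto
    show ?thesis if "det3 P1 P2 P3 = 0" "det3 P2 P3 P4 = 0"
      using chain[of P2 P3 P1 P4] that distinct det3_eq_0_perms[OF that(1)] det3_eq_0_perms[OF that(2)]
      by auto
    show ?thesis if "det3 P1 P2 P4 = 0" "det3 P1 P3 P4 = 0"
      using chain[of P1 P4 P2 P3] that distinct det3_eq_0_perms[OF that(1)] det3_eq_0_perms[OF that(2)]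
      by auto
    show ?thesis if "det3 P1 P2 P4 = 0" "det3 P2 P3 P4 = 0"
      using chain[of P2 P4 P1 P3] that distinct det3_eq_0_perms[OF that(1)] det3_eq_0_perms[OF that(2)]
      by auto
    show ?thesis if "det3 P1 P3 P4 = 0" "det3 P2 P3 P4 = 0"
      using chain[of P3 P4 P1 P2] that distinct det3_eq_0_perms[OF that(1)] det3_eq_0_perms[OF that(2)]
      by auto
  qed
qed

end

theorem proposition3p3:
  fixes P1 P2 P3 P4 :: "complex^3"
  assumes "null_lift P1" "null_lift P2" "null_lift P3" "null_lift P4"
    and "\<not> same_point P1 P2" "\<not> same_point P1 P3" "\<not> same_point P1 P4"
    and "\<not> same_point P2 P3" "\<not> same_point P2 P4" "\<not> same_point P3 P4"
  defines "x \<equiv> (cross_ratio P1 P2 P3 P4, cross_ratio P1 P3 P2 P4, cartan_inv P1 P2 P3)"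
  shows "((on_chain [P1, P2, P3] \<or> on_chain [P1, P2, P4] \<or> on_chain [P1, P3, P4]
            \<or> on_chain [P2, P3, P4]) \<longleftrightarrow> num_cartan x \<ge> 1)
         \<and> (on_chain [P1, P2, P3, P4] \<longleftrightarrow> num_cartan x \<ge> 2)"
proof -
  have varieties: "x \<in> S123 \<longleftrightarrow> det3 P1 P2 P3 = 0" "x \<in> S124 \<longleftrightarrow> det3 P1 P2 P4 = 0"
    "x \<in> S134 \<longleftrightarrow> det3 P1 P3 P4 = 0" "x \<in> S234 \<longleftrightarrow> det3 P2 P3 P4 = 0"
    unfolding x_def
    using mem_S123_iff[OF assms(1-3,5,6,8)] mem_S124_iff[OF assms(1-10)]
      mem_S134_iff[OF assms(1-10)] mem_S234_iff[OF assms(1-10)] by simp_all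
  have triples: "on_chain [P1, P2, P3] \<longleftrightarrow> det3 P1 P2 P3 = 0"
    "on_chain [P1, P2, P4] \<longleftrightarrow> det3 P1 P2 P4 = 0" "on_chain [P1, P3, P4] \<longleftrightarrow> det3 P1 P3 P4 = 0"
    "on_chain [P2, P3, P4] \<longleftrightarrow> det3 P2 P3 P4 = 0"
    using on_chain3_iff_det3 assms by simp_all
  have "on_chain [P1, P2, P3, P4] \<Longrightarrow> det3 P1 P2 P3 = 0 \<and> det3 P1 P2 P4 = 0"
    using det3_eq_0_of_on_chain[of "[P1, P2, P3, P4]"] by simp
  with on_chain4_of_two_det3[OF assms(1-10)] have quadruple:
    "on_chain [P1, P2, P3, P4] \<longleftrightarrow> (det3 P1 P2 P3 = 0 \<and> det3 P1 P2 P4 = 0)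
      \<or> (det3 P1 P2 P3 = 0 \<and> det3 P1 P3 P4 = 0) \<or> (det3 P1 P2 P3 = 0 \<and> det3 P2 P3 P4 = 0)
      \<or> (det3 P1 P2 P4 = 0 \<and> det3 P1 P3 P4 = 0) \<or> (det3 P1 P2 P4 = 0 \<and> det3 P2 P3 P4 = 0)
      \<or> (det3 P1 P3 P4 = 0 \<and> det3 P2 P3 P4 = 0)"
    by blast
  have "num_cartan x = (if x \<in> S123 then 1 else 0) + (if x \<in> S124 then 1 else 0)
      + (if x \<in> S134 then 1 else 0) + (if x \<in> S234 then 1 else 0)"
    by (simp add: num_cartan_def cartan_varieties_def)
  then show ?thesis
    unfolding triples quadruple varieties by auto
qed

end
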